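(* Let $W\in\mathcal A$ be a $\phi$-Lyapunov function ($W\ge1$, $\phi:\mathbb R^+\to(0,\infty)$ $\mathcal C^1$ increasing, $LW\le-\phi(W)+b\mathbf 1_K$ for some $K\subset E$, $b\ge0$), and assume $\mu$ satisfies a local Poincaré inequality on some $U\supseteq K$ with constant $\kappa_U$. Then for any $g\in\mathcal A$, $$\inf_{c\in\mathbb R}\int(g-c)^2\,\frac{\phi(W)}{W}\,d\mu\le(1+b\kappa_U)\int\Gamma(g)\,d\mu .$$
   Context: Standing framework: $E$ Polish, $\mu$ a probability measure, $L$ a $\mu$-symmetric diffusion operator with algebra $\mathcal A$ of bounded functions (containing constants, dense in the domain of $L$), carré du champ $\Gamma(f,g)=\frac12(L(fg)-fLg-gLf)$, $\Gamma(f)=\Gamma(f,f)$, a derivation satisfying the chain rule, with $\int\Gamma(f,g)d\mu=-\int fLg\,d\mu$. Local Poincaré inequality on $U$ with constant $\kappa_U$: for all $f\in\mathcal A$, $\int_Uf^2d\mu\le\kappa_U\int_E\Gamma(f)d\mu+\frac1{\mu(U)}(\int_Uf\,d\mu)^2$. All integrations by parts are assumed justified. *)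

theory Defs
  imports "HOL-Probability.Probability"
begin

definition smooth_fun :: "(real \<Rightarrow> real) \<Rightarrow> bool" where
  "smooth_fun \<psi> \<longleftrightarrow>
     (\<exists>d :: nat \<Rightarrow> real \<Rightarrow> real. d 0 = \<psi> \<and>
        (\<forall>n x. (d n has_real_derivative d (Suc n) x) (at x)))"

definition carre :: "(('a \<Rightarrow> real) \<Rightarrow> ('a \<Rightarrow> real)) \<Rightarrow> ('a \<Rightarrow> real) \<Rightarrow> ('a \<Rightarrow> real) \<Rightarrow> 'a \<Rightarrow> real" where
  "carre L f g = (\<lambda>x. (L (\<lambda>y. f y * g y) x - f x * L g x - g x * L f x) / 2)"

definition diffusion_setting ::
  "'a::topological_space measure \<Rightarrow> ('a \<Rightarrow> real) set \<Rightarrow> (('a \<Rightarrow> real) \<Rightarrow> ('a \<Rightarrow> real)) \<Rightarrow> bool" where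
  "diffusion_setting M A L \<longleftrightarrow>
     prob_space M \<and> sets M = sets borel \<and>
     (\<forall>c. (\<lambda>_. c) \<in> A) \<and>
     (\<forall>f\<in>A. \<forall>g\<in>A. (\<lambda>x. f x + g x) \<in> A \<and> (\<lambda>x. f x * g x) \<in> A) \<and>
     (\<forall>f\<in>A. \<forall>c. (\<lambda>x. c * f x) \<in> A) \<and>
     (\<forall>f\<in>A. f \<in> borel_measurable M \<and> (\<exists>B. \<forall>x. \<bar>f x\<bar> \<le> B)) \<and>
     (\<forall>f\<in>A. L f \<in> borel_measurable M \<and> integrable M (L f)) \<and>
     (\<forall>f\<in>A. \<forall>g\<in>A. L (\<lambda>x. f x + g x) = (\<lambda>x. L f x + L g x)) \<and>
     (\<forall>f\<in>A. \<forall>c. L (\<lambda>x. c * f x) = (\<lambda>x. c * L f x)) \<and>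
     (\<forall>f\<in>A. \<forall>g\<in>A. (\<integral>x. f x * L g x \<partial>M) = (\<integral>x. g x * L f x \<partial>M)) \<and>
     (\<forall>f\<in>A. \<forall>g\<in>A. (\<integral>x. carre L f g x \<partial>M) = - (\<integral>x. f x * L g x \<partial>M)) \<and>
     (\<forall>f\<in>A. \<forall>x. carre L f f x \<ge> 0) \<and>
     (\<forall>f\<in>A. \<forall>g\<in>A. \<forall>h\<in>A. \<forall>x.
        carre L (\<lambda>y. f y * g y) h x = f x * carre L g h x + g x * carre L f h x) \<and>
     (\<forall>f\<in>A. \<forall>\<psi>. smooth_fun \<psi> \<longrightarrow>
        (\<psi> \<circ> f) \<in> A \<and>
        (\<forall>g\<in>A. \<forall>x. carre L (\<psi> \<circ> f) g x = deriv \<psi> (f x) * carre L f g x))"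

definition local_poincare ::
  "'a measure \<Rightarrow> ('a \<Rightarrow> real) set \<Rightarrow> (('a \<Rightarrow> real) \<Rightarrow> ('a \<Rightarrow> real)) \<Rightarrow> 'a set \<Rightarrow> real \<Rightarrow> bool" where
  "local_poincare M A L U \<kappa> \<longleftrightarrow>
     U \<in> sets M \<and>
     (\<forall>f\<in>A. (\<integral>x\<in>U. (f x)\<^sup>2 \<partial>M)
        \<le> \<kappa> * (\<integral>x. carre L f f x \<partial>M) + (1 / measure M U) * (\<integral>x\<in>U. f x \<partial>M)\<^sup>2)"

definition phi_lyapunov ::
  "('a \<Rightarrow> real) set \<Rightarrow> (('a \<Rightarrow> real) \<Rightarrow> ('a \<Rightarrow> real)) \<Rightarrow> (real \<Rightarrow> real) \<Rightarrow> ('a \<Rightarrow> real)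
     \<Rightarrow> 'a set \<Rightarrow> real \<Rightarrow> bool" where
  "phi_lyapunov A L \<phi> W K b \<longleftrightarrow>
     W \<in> A \<and> (\<forall>x. W x \<ge> 1) \<and>
     (\<forall>t>0. \<phi> t > 0) \<and> \<phi> C1_differentiable_on {0<..} \<and> mono_on {0<..} \<phi> \<and>
     b \<ge> 0 \<and>
     (\<forall>x. L W x \<le> - \<phi> (W x) + b * indicator K x)"

end

theory Submission
  imports Defs "HOL-Computational_Algebra.Polynomial"
begin

(* Let f = g - c with c the mean of g on U, so that the local Poincare
   inequality reads  int_U f^2 <= kappa int Gamma(f).  The idea is to test the
   Lyapunov inequality  LW <= -phi(W) + b 1_K  against h = f^2 / W:
       int f^2 phi(W)/W <= - int h LW + b int_U f^2
                         =   int Gamma(h, W) + b int_U f^2,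
   and  Gamma(f^2/W, W) = 2 f/W Gamma(f,W) - f^2/W^2 Gamma(W) <= Gamma(f)  by
   Cauchy-Schwarz for Gamma.  Since t -> 1/t is not smooth on the whole line
   (the chain rule is only available for smooth functions), 1/W is replaced by
   psi_e(W) with psi_e(t) = t/(t^2+e); this costs factors 1+e and 1+2e, which
   disappear in the limit e -> 0. *)

section \<open>The smooth approximation \<open>t / (t\<^sup>2 + e)\<close> of \<open>1 / t\<close>\<close>

definition psi :: "real \<Rightarrow> real \<Rightarrow> real" where
  "psi e t = t / (t\<^sup>2 + e)"

text \<open>The n-th derivative of \<open>psi e\<close> is \<open>psi_num e n / (t\<^sup>2 + e)^(n+1)\<close>,
  with the numerator polynomials given by the quotient rule.\<close>
fun psi_num :: "real \<Rightarrow> nat \<Rightarrow> real poly" where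
  "psi_num e 0 = [:0, 1:]"
| "psi_num e (Suc n) =
     pderiv (psi_num e n) * [:e, 0, 1:] - smult (2 * (real n + 1)) ([:0, 1:] * psi_num e n)"

lemma psi_num_derivative:
  assumes e: "e > 0"
  shows "((\<lambda>t. poly (psi_num e n) t / (t\<^sup>2 + e) ^ Suc n) has_real_derivative
          poly (psi_num e (Suc n)) t / (t\<^sup>2 + e) ^ Suc (Suc n)) (at t)"
proof -
  define Q where "Q = t\<^sup>2 + e"
  define P where "P = poly (psi_num e n) t"
  define P' where "P' = poly (pderiv (psi_num e n)) t"
  have Q: "Q > 0" using e by (simp add: Q_def add_nonneg_pos)
  have dQ: "((\<lambda>t. (t\<^sup>2 + e) ^ Suc n) has_real_derivative
              real (Suc n) * (2 * t * Q ^ n)) (at t)"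
  proof -
    have "((\<lambda>t. t\<^sup>2 + e) has_real_derivative 2 * t) (at t)"
      by (auto intro!: derivative_eq_intros)
    from DERIV_power[OF this, of "Suc n"] show ?thesis by (simp add: Q_def)
  qed
  have quotient: "((\<lambda>t. poly (psi_num e n) t / (t\<^sup>2 + e) ^ Suc n) has_real_derivative
       (P' * Q ^ Suc n - P * (real (Suc n) * (2 * t * Q ^ n))) / (Q ^ Suc n * Q ^ Suc n)) (at t)"
    using DERIV_divide[OF poly_DERIV dQ] Q by (simp add: P_def P'_def Q_def)
  have num: "P' * Q ^ Suc n - P * (real (Suc n) * (2 * t * Q ^ n))
             = Q ^ n * (P' * Q - 2 * (real n + 1) * t * P)"
    by (simp add: algebra_simps)
  have den: "Q ^ Suc n * Q ^ Suc n = Q ^ n * Q ^ Suc (Suc n)"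
    by (simp add: power_add[symmetric])
  have next_num: "poly (psi_num e (Suc n)) t = P' * Q - 2 * (real n + 1) * t * P"
    by (simp add: P_def P'_def Q_def algebra_simps power2_eq_square)
  show ?thesis
    using quotient Q unfolding num den next_num by (simp add: Q_def)
qed

lemma smooth_psi: "e > 0 \<Longrightarrow> smooth_fun (psi e)"
  unfolding smooth_fun_def
  by (rule exI[of _ "\<lambda>n t. poly (psi_num e n) t / (t\<^sup>2 + e) ^ Suc n"])
     (use psi_num_derivative[of e] in \<open>auto simp: psi_def\<close>)

lemma deriv_psi:
  assumes e: "e > 0"
  shows "deriv (psi e) t = (e - t\<^sup>2) / (t\<^sup>2 + e)\<^sup>2"
proof -
  have "psi e = (\<lambda>t. poly (psi_num e 0) t / (t\<^sup>2 + e) ^ Suc 0)"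
    by (auto simp: psi_def)
  then have "deriv (psi e) t = poly (psi_num e 1) t / (t\<^sup>2 + e) ^ Suc (Suc 0)"
    using psi_num_derivative[OF e, of 0 t] by (simp add: DERIV_imp_deriv)
  also have "\<dots> = (e - t\<^sup>2) / (t\<^sup>2 + e)\<^sup>2"
    by (simp add: power2_eq_square algebra_simps pderiv_pCons)
  finally show ?thesis .
qed

text \<open>The two properties of \<open>psi e\<close> that replace \<open>(1/t)' = -(1/t)\<^sup>2\<close> and
  \<open>1/t = psi 0 t\<close> on \<open>[1, \<infinity>)\<close>: with \<open>e = \<delta>/2\<close>, \<open>(1+\<delta>) psi' \<le> -psi\<^sup>2\<close>.\<close>
lemma psi_deriv_bound:
  assumes "0 < \<delta>" "\<delta> \<le> 1" "t \<ge> 1"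
  shows "(1 + \<delta>) * ((\<delta>/2 - t\<^sup>2) / (t\<^sup>2 + \<delta>/2)\<^sup>2) \<le> - (psi (\<delta>/2) t)\<^sup>2"
proof -
  have q: "t\<^sup>2 + \<delta>/2 > 0" using assms by (simp add: add_nonneg_pos)
  have "\<delta>/2 * (1 + \<delta>) \<le> \<delta>" using assms by (simp add: algebra_simps mult_left_le)
  also have "\<delta> \<le> \<delta> * t\<^sup>2" using assms by (simp add: one_le_power)
  finally have "(1 + \<delta>) * (\<delta>/2 - t\<^sup>2) \<le> - t\<^sup>2" by (simp add: algebra_simps)
  then show ?thesis using q by (simp add: psi_def power_divide divide_le_eq)
qed

lemma psi_approximates_inverse:
  assumes "e > 0" "t \<ge> 1"
  shows "0 \<le> psi e t" "psi e t \<le> 1" "1 / t \<le> (1 + e) * psi e t"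
proof -
  have q: "t\<^sup>2 + e > 0" using assms by (simp add: add_nonneg_pos)
  have t2: "t \<le> t\<^sup>2" "1 \<le> t\<^sup>2"
    using assms mult_mono[of 1 t 1 t] mult_left_mono[of 1 t t] by (auto simp: power2_eq_square)
  show "0 \<le> psi e t" using assms q by (simp add: psi_def)
  show "psi e t \<le> 1" using assms q t2 by (simp add: psi_def)
  have "e \<le> e * t\<^sup>2" using assms t2 by simp
  then show "1 / t \<le> (1 + e) * psi e t"
    using assms q by (simp add: psi_def field_simps power2_eq_square)
qed

text \<open>Pointwise Cauchy-Schwarz step: if the quadratic form \<open>t \<mapsto> Gf + 2tC + t\<^sup>2G\<close>
  (in the application \<open>\<Gamma>(f + tW)\<close>) is nonnegative and \<open>a d \<le> -p\<^sup>2\<close>, then the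
  cross term \<open>2 p f C\<close> is absorbed by \<open>a Gf\<close> and the negative term \<open>f\<^sup>2 d G\<close>.\<close>
lemma quadratic_form_absorption:
  fixes a d p f G C Gf :: real
  assumes a: "a > 0" and G: "G \<ge> 0" and dp: "a * d \<le> - p\<^sup>2"
    and form: "\<And>t. 0 \<le> Gf + 2 * t * C + t\<^sup>2 * G"
  shows "f\<^sup>2 * (d * G) + p * (2 * f * C) \<le> a * Gf"
proof -
  have neg: "a * (f\<^sup>2 * d * G) \<le> - (f\<^sup>2 * p\<^sup>2 * G)"
    using mult_right_mono[OF dp, of "f\<^sup>2 * G"] G by (simp add: algebra_simps)
  have "0 \<le> a\<^sup>2 * (Gf + 2 * (- (f * p / a)) * C + (- (f * p / a))\<^sup>2 * G)"
    using form[of "- (f * p / a)"] by simp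
  also have "\<dots> = a\<^sup>2 * Gf - 2 * a * (f * p) * C + (f * p)\<^sup>2 * G"
    using a by (simp add: field_simps power2_eq_square)
  finally have "a * (f\<^sup>2 * (d * G) + p * (2 * f * C)) \<le> a * (a * Gf)"
    using neg by (simp add: algebra_simps power2_eq_square)
  then show ?thesis using a by simp
qed

lemma carre_sym: "carre L f g = carre L g f"
  unfolding carre_def by (auto simp: mult.commute)

lemma phi_lyapunovD:
  assumes "phi_lyapunov A L \<phi> W K b"
  shows "W \<in> A" "W x \<ge> 1" "t > 0 \<Longrightarrow> \<phi> t > 0" "\<phi> C1_differentiable_on {0<..}"
    "mono_on {0<..} \<phi>" "b \<ge> 0" "L W x \<le> - \<phi> (W x) + b * indicator K x"
  using assms by (simp_all add: phi_lyapunov_def)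

lemma local_poincareD:
  "local_poincare M A L U \<kappa> \<Longrightarrow> f \<in> A \<Longrightarrow>
     (\<integral>x\<in>U. (f x)\<^sup>2 \<partial>M) \<le> \<kappa> * (\<integral>x. carre L f f x \<partial>M) + (1 / measure M U) * (\<integral>x\<in>U. f x \<partial>M)\<^sup>2"
  by (simp add: local_poincare_def)

section \<open>Calculus in the diffusion setting\<close>

locale diffusion =
  fixes M :: "'a::topological_space measure" and A :: "('a \<Rightarrow> real) set"
    and L :: "('a \<Rightarrow> real) \<Rightarrow> 'a \<Rightarrow> real"
  assumes setting: "diffusion_setting M A L"
begin

lemma prob_space_M: "prob_space M"
  using setting unfolding diffusion_setting_def by blast

lemma const_in_A: "(\<lambda>_. c) \<in> A"
  using setting unfolding diffusion_setting_def by simp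

lemma add_in_A: "f \<in> A \<Longrightarrow> g \<in> A \<Longrightarrow> (\<lambda>x. f x + g x) \<in> A"
  using setting unfolding diffusion_setting_def by simp

lemma mult_in_A: "f \<in> A \<Longrightarrow> g \<in> A \<Longrightarrow> (\<lambda>x. f x * g x) \<in> A"
  using setting unfolding diffusion_setting_def by simp

lemma scale_in_A: "f \<in> A \<Longrightarrow> (\<lambda>x. c * f x) \<in> A"
  using setting unfolding diffusion_setting_def by simp

lemma measurable_A: "f \<in> A \<Longrightarrow> f \<in> borel_measurable M"
  using setting unfolding diffusion_setting_def by blast

lemma bounded_A: "f \<in> A \<Longrightarrow> \<exists>B. \<forall>x. \<bar>f x\<bar> \<le> B"
  using setting unfolding diffusion_setting_def by blast

lemma integrable_L: "f \<in> A \<Longrightarrow> integrable M (L f)"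
  using setting unfolding diffusion_setting_def by blast

lemma L_add: "f \<in> A \<Longrightarrow> g \<in> A \<Longrightarrow> L (\<lambda>x. f x + g x) = (\<lambda>x. L f x + L g x)"
  using setting unfolding diffusion_setting_def by blast

lemma L_scale: "f \<in> A \<Longrightarrow> L (\<lambda>x. c * f x) = (\<lambda>x. c * L f x)"
  using setting unfolding diffusion_setting_def by blast

lemma integration_by_parts:
    "f \<in> A \<Longrightarrow> g \<in> A \<Longrightarrow> (\<integral>x. carre L f g x \<partial>M) = - (\<integral>x. f x * L g x \<partial>M)"
  using setting unfolding diffusion_setting_def by blast

lemma carre_nonneg: "f \<in> A \<Longrightarrow> carre L f f x \<ge> 0"
  using setting unfolding diffusion_setting_def by blast

lemma carre_leibniz: "f \<in> A \<Longrightarrow> g \<in> A \<Longrightarrow> h \<in> A \<Longrightarrow>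
     carre L (\<lambda>y. f y * g y) h x = f x * carre L g h x + g x * carre L f h x"
  using setting unfolding diffusion_setting_def by blast

lemma smooth_comp_in_A: "f \<in> A \<Longrightarrow> smooth_fun \<psi> \<Longrightarrow> (\<psi> \<circ> f) \<in> A"
  using setting unfolding diffusion_setting_def by blast

lemma carre_chain: "f \<in> A \<Longrightarrow> smooth_fun \<psi> \<Longrightarrow> g \<in> A \<Longrightarrow>
     carre L (\<psi> \<circ> f) g x = deriv \<psi> (f x) * carre L f g x"
  using setting unfolding diffusion_setting_def by blast

lemma square_in_A: "f \<in> A \<Longrightarrow> (\<lambda>x. (f x)\<^sup>2) \<in> A"
  using mult_in_A[of f f] by (simp add: power2_eq_square)

lemma carre_add_left:
  assumes "f \<in> A" "g \<in> A" "h \<in> A"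
  shows "carre L (\<lambda>x. f x + g x) h x = carre L f h x + carre L g h x"
proof -
  have "(\<lambda>y. (f y + g y) * h y) = (\<lambda>y. f y * h y + g y * h y)"
    by (auto simp: algebra_simps)
  then show ?thesis unfolding carre_def
    using L_add[OF mult_in_A[OF assms(1,3)] mult_in_A[OF assms(2,3)]] L_add[OF assms(1,2)]
    by (simp add: algebra_simps add_divide_distrib diff_divide_distrib)
qed

lemma carre_scale_left:
  assumes "f \<in> A" "h \<in> A"
  shows "carre L (\<lambda>x. c * f x) h x = c * carre L f h x"
proof -
  have "(\<lambda>y. c * f y * h y) = (\<lambda>y. c * (f y * h y))"
    by (auto simp: algebra_simps)
  then show ?thesis unfolding carre_def
    using L_scale[OF mult_in_A[OF assms], of c] L_scale[OF assms(1), of c]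
    by (simp add: algebra_simps diff_divide_distrib)
qed

text \<open>Constants have no energy: by the Leibniz rule \<open>\<Gamma>(1,h) = 2 \<Gamma>(1,h)\<close>.\<close>
lemma carre_const:
  assumes h: "h \<in> A"
  shows "carre L (\<lambda>_. c) h x = 0"
proof -
  have "carre L (\<lambda>_. 1) h x = 0"
    using carre_leibniz[OF const_in_A const_in_A h, of 1 1 x] by simp
  then show ?thesis using carre_scale_left[OF const_in_A h, of c 1] by simp
qed

lemma carre_shift:
  assumes f: "f \<in> A"
  shows "carre L (\<lambda>x. f x + c) (\<lambda>x. f x + c) = carre L f f"
proof (rule ext)
  fix x
  have fc: "(\<lambda>x. f x + c) \<in> A" using add_in_A[OF f const_in_A] .
  have "carre L (\<lambda>x. f x + c) (\<lambda>x. f x + c) x = carre L f (\<lambda>x. f x + c) x"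
    using carre_add_left[OF f const_in_A fc] carre_const[OF fc] by simp
  also have "\<dots> = carre L (\<lambda>x. f x + c) f x"
    by (simp only: carre_sym[of L f "\<lambda>x. f x + c"])
  also have "\<dots> = carre L f f x"
    using carre_add_left[OF f const_in_A f] carre_const[OF f] by simp
  finally show "carre L (\<lambda>x. f x + c) (\<lambda>x. f x + c) x = carre L f f x" .
qed

text \<open>Expanding \<open>\<Gamma>(u + t w) \<ge> 0\<close> gives the quadratic form used for Cauchy-Schwarz.\<close>
lemma carre_quadratic_form_nonneg:
  assumes u: "u \<in> A" and w: "w \<in> A"
  shows "0 \<le> carre L u u x + 2 * t * carre L u w x + t\<^sup>2 * carre L w w x"
proof -
  have tw: "(\<lambda>y. t * w y) \<in> A" using scale_in_A[OF w] .
  have v: "(\<lambda>y. u y + t * w y) \<in> A" using add_in_A[OF u tw] .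
  have "carre L (\<lambda>y. u y + t * w y) (\<lambda>y. u y + t * w y) x
     = carre L u (\<lambda>y. u y + t * w y) x + t * carre L w (\<lambda>y. u y + t * w y) x"
    using carre_add_left[OF u tw v] carre_scale_left[OF w v] by simp
  also have "carre L u (\<lambda>y. u y + t * w y) x = carre L u u x + t * carre L u w x"
    using carre_add_left[OF u tw u] carre_scale_left[OF w u] carre_sym[of L] by metis
  also have "carre L w (\<lambda>y. u y + t * w y) x = carre L u w x + t * carre L w w x"
    using carre_add_left[OF u tw w] carre_scale_left[OF w w] carre_sym[of L] by metis
  finally show ?thesis
    using carre_nonneg[OF v, of x] by (simp add: algebra_simps power2_eq_square)
qed

lemma integrable_bounded:
  fixes u :: "'a \<Rightarrow> real"
  assumes "u \<in> borel_measurable M" "\<And>x. \<bar>u x\<bar> \<le> B"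
  shows "integrable M u"
  using prob_space_M assms
  by (intro finite_measure.integrable_const_bound[where B=B])
     (auto simp: prob_space_def)

lemma integrable_A: "f \<in> A \<Longrightarrow> integrable M f"
  using bounded_A measurable_A integrable_bounded by metis

text \<open>Functions of \<open>A\<close> are bounded, hence multipliers of integrable functions.\<close>
lemma integrable_A_mult:
  assumes f: "f \<in> A" and g: "integrable M g"
  shows "integrable M (\<lambda>x. f x * g x)"
proof -
  obtain B where B: "\<And>x. \<bar>f x\<bar> \<le> B" using bounded_A[OF f] by blast
  show ?thesis
  proof (rule Bochner_Integration.integrable_bound[where f="\<lambda>x. B * \<bar>g x\<bar>"])
    show "integrable M (\<lambda>x. B * \<bar>g x\<bar>)" using g by auto
    show "(\<lambda>x. f x * g x) \<in> borel_measurable M" using measurable_A[OF f] g by measurable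
    show "AE x in M. norm (f x * g x) \<le> norm (B * \<bar>g x\<bar>)"
    proof (intro AE_I2)
      fix x
      have "\<bar>f x\<bar> * \<bar>g x\<bar> \<le> B * \<bar>g x\<bar>" using B by (simp add: mult_right_mono)
      moreover have "B \<ge> 0" using B[of x] by linarith
      ultimately show "norm (f x * g x) \<le> norm (B * \<bar>g x\<bar>)" by (simp add: abs_mult)
    qed
  qed
qed

text \<open>\<open>\<Gamma>(f,g)\<close> is integrable because \<open>L(fg)\<close>, \<open>f Lg\<close> and \<open>g Lf\<close> are.\<close>
lemma integrable_carre:
  assumes f: "f \<in> A" and g: "g \<in> A"
  shows "integrable M (carre L f g)"
  using integrable_L[OF mult_in_A[OF f g]] integrable_A_mult[OF f integrable_L[OF g]]
    integrable_A_mult[OF g integrable_L[OF f]]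
  by (simp add: carre_def[abs_def])

section \<open>The Lyapunov argument\<close>

text \<open>The decay rate evaluated along \<open>W\<close> is measurable (\<open>\<phi>\<close> is continuous on the
  range \<open>[1, \<infinity>)\<close> of \<open>W\<close>) and bounded by \<open>\<phi>\<close> at the bound of \<open>W\<close> (monotonicity),
  so both \<open>\<phi>(W)\<close> and the weight \<open>\<phi>(W)/W\<close> are integrable.\<close>
lemma lyapunov_rate_integrable:
  assumes lyap: "phi_lyapunov A L \<phi> W K b"
  shows "integrable M (\<lambda>x. \<phi> (W x))" "integrable M (\<lambda>x. \<phi> (W x) / W x)"
proof -
  note W = phi_lyapunovD[OF lyap]
  have Wm[measurable]: "W \<in> borel_measurable M" by (rule measurable_A[OF W(1)])
  obtain BW where BW: "\<And>x. \<bar>W x\<bar> \<le> BW" using bounded_A[OF W(1)] by blast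
  have pos: "\<phi> (W x) > 0" for x using W(2)[of x] W(3)[of "W x"] by simp
  have bound: "\<phi> (W x) \<le> \<phi> BW" for x
    using W(2)[of x] BW[of x] by (intro mono_onD[OF W(5)]) auto
  have "continuous_on UNIV (\<lambda>t. \<phi> (max t 1))"
    using C1_differentiable_imp_continuous_on[OF W(4)]
    by (rule continuous_on_compose2) (auto intro!: continuous_intros)
  then have "(\<lambda>x. \<phi> (max (W x) 1)) \<in> borel_measurable M"
    using Wm by (rule borel_measurable_continuous_on)
  moreover have "(\<lambda>x. \<phi> (max (W x) 1)) = (\<lambda>x. \<phi> (W x))"
    using W(2) by (simp add: max_absorb1)
  ultimately have \<phi>m[measurable]: "(\<lambda>x. \<phi> (W x)) \<in> borel_measurable M" by simp
  show "integrable M (\<lambda>x. \<phi> (W x))"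
    using pos bound by (intro integrable_bounded[where B="\<phi> BW"]) (auto simp: less_imp_le)
  have "\<bar>\<phi> (W x) / W x\<bar> \<le> \<phi> (W x)" for x
    using W(2)[of x] pos[of x] by (simp add: divide_le_eq abs_of_pos)
  then show "integrable M (\<lambda>x. \<phi> (W x) / W x)"
    using bound by (intro integrable_bounded[where B="\<phi> BW"]) (auto intro: order_trans)
qed

text \<open>Testing the Lyapunov condition against \<open>0 \<le> h \<le> F\<close> and integrating by
  parts: the decay \<open>\<phi>(W)\<close> is controlled by the energy \<open>\<Gamma>(h, W)\<close> plus the local
  mass of \<open>F\<close> on a set containing \<open>K\<close>.\<close>
lemma lyapunov_energy_estimate:
  assumes lyap: "phi_lyapunov A L \<phi> W K b" and KU: "K \<subseteq> U" and U: "U \<in> sets M"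
    and h: "h \<in> A" and F: "F \<in> A" and h_nonneg: "\<And>x. 0 \<le> h x" and h_le: "\<And>x. h x \<le> F x"
  shows "(\<integral>x. h x * \<phi> (W x) \<partial>M) \<le> (\<integral>x. carre L h W x \<partial>M) + b * (\<integral>x\<in>U. F x \<partial>M)"
proof -
  note W = phi_lyapunovD[OF lyap]
  have pointwise: "h x * \<phi> (W x) \<le> - (h x * L W x) + b * (indicator U x * F x)" for x
  proof -
    have "h x * L W x \<le> h x * (- \<phi> (W x) + b * indicator K x)"
      using mult_left_mono[OF W(7) h_nonneg] .
    moreover have "h x * (b * indicator K x) \<le> F x * (b * indicator U x)"
      using h_nonneg[of x] h_le[of x] W(6) KU by (intro mult_mono) (auto simp: indicator_def)
    ultimately show ?thesis by (simp add: algebra_simps)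
  qed
  have int_hLW: "integrable M (\<lambda>x. h x * L W x)"
    by (rule integrable_A_mult[OF h integrable_L[OF W(1)]])
  have int_UF: "integrable M (\<lambda>x. indicator U x * F x)"
    using integrable_mult_indicator[OF U integrable_A[OF F]] by simp
  have "(\<integral>x. h x * \<phi> (W x) \<partial>M) \<le> (\<integral>x. - (h x * L W x) + b * (indicator U x * F x) \<partial>M)"
    using pointwise int_hLW int_UF
    by (intro integral_mono integrable_A_mult[OF h] lyapunov_rate_integrable[OF lyap]) auto
  also have "\<dots> = - (\<integral>x. h x * L W x \<partial>M) + b * (\<integral>x\<in>U. F x \<partial>M)"
    using int_hLW int_UF by (simp add: set_lebesgue_integral_def)
  also have "- (\<integral>x. h x * L W x \<partial>M) = (\<integral>x. carre L h W x \<partial>M)"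
    using integration_by_parts[OF h W(1)] by simp
  finally show ?thesis .
qed

text \<open>The gradient bound \<open>\<Gamma>(f\<^sup>2/W, W) \<le> \<Gamma>(f)\<close>, with \<open>1/W\<close> replaced by \<open>psi(W)\<close>
  and a loss \<open>1+\<delta>\<close>: chain and Leibniz rules followed by Cauchy-Schwarz for \<open>\<Gamma>\<close>.\<close>
lemma carre_weighted_square_bound:
  assumes W: "W \<in> A" "\<And>x. W x \<ge> 1" and f: "f \<in> A" and \<delta>: "0 < \<delta>" "\<delta> \<le> 1"
  shows "carre L (\<lambda>y. (f y)\<^sup>2 * (psi (\<delta>/2) \<circ> W) y) W x \<le> (1 + \<delta>) * carre L f f x"
proof -
  define e where "e = \<delta>/2"
  have e: "e > 0" using \<delta> by (simp add: e_def)
  have V: "psi e \<circ> W \<in> A" by (rule smooth_comp_in_A[OF W(1) smooth_psi[OF e]])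
  have carre_V: "carre L (psi e \<circ> W) W x = deriv (psi e) (W x) * carre L W W x"
    by (rule carre_chain[OF W(1) smooth_psi[OF e] W(1)])
  have carre_square: "carre L (\<lambda>y. (f y)\<^sup>2) W x = 2 * f x * carre L f W x"
    using carre_leibniz[OF f f W(1), of x] by (simp add: power2_eq_square)
  have "carre L (\<lambda>y. (f y)\<^sup>2 * (psi e \<circ> W) y) W x
      = (f x)\<^sup>2 * (deriv (psi e) (W x) * carre L W W x) + psi e (W x) * (2 * f x * carre L f W x)"
    using carre_leibniz[OF square_in_A[OF f] V W(1), of x] carre_V carre_square by simp
  also have "\<dots> \<le> (1 + \<delta>) * carre L f f x"
  proof (rule quadratic_form_absorption)
    show "(1 + \<delta>) * deriv (psi e) (W x) \<le> - (psi e (W x))\<^sup>2"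
      unfolding deriv_psi[OF e] unfolding e_def using psi_deriv_bound[OF \<delta> W(2)] by simp
  qed (use \<delta> carre_nonneg[OF W(1)] carre_quadratic_form_nonneg[OF f W(1)] in auto)
  finally show ?thesis by (simp add: e_def)
qed

lemma weighted_poincare_approx:
  assumes lyap: "phi_lyapunov A L \<phi> W K b" and KU: "K \<subseteq> U" and U: "U \<in> sets M"
    and g: "g \<in> A"
    and poincare: "(\<integral>x\<in>U. (g x - c)\<^sup>2 \<partial>M) \<le> \<kappa> * (\<integral>x. carre L g g x \<partial>M)"
    and \<delta>: "0 < \<delta>" "\<delta> \<le> 1"
  shows "(\<integral>x. (g x - c)\<^sup>2 * (\<phi> (W x) / W x) \<partial>M)
           \<le> (1 + \<delta>/2) * ((1 + \<delta> + b * \<kappa>) * (\<integral>x. carre L g g x \<partial>M))"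
proof -
  note W = phi_lyapunovD[OF lyap]
  define e where "e = \<delta>/2"
  have e: "e > 0" using \<delta> by (simp add: e_def)
  define f where "f = (\<lambda>x. g x + - c)"
  have f: "f \<in> A" unfolding f_def by (rule add_in_A[OF g const_in_A])
  have f_sq: "(f x)\<^sup>2 = (g x - c)\<^sup>2" for x by (simp add: f_def)
  have energy: "(\<integral>x. carre L f f x \<partial>M) = (\<integral>x. carre L g g x \<partial>M)"
    unfolding f_def carre_shift[OF g] ..
  define G where "G = (\<integral>x. carre L g g x \<partial>M)"
  define h where "h = (\<lambda>y. (f y)\<^sup>2 * (psi e \<circ> W) y)"
  have h: "h \<in> A"
    unfolding h_def by (rule mult_in_A[OF square_in_A[OF f] smooth_comp_in_A[OF W(1) smooth_psi[OF e]]])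
  have psi_W: "0 \<le> psi e (W x)" "psi e (W x) \<le> 1" "1 / W x \<le> (1 + e) * psi e (W x)" for x
    using psi_approximates_inverse[OF e W(2)] by auto
  have weight: "(\<integral>x. (f x)\<^sup>2 * (\<phi> (W x) / W x) \<partial>M) \<le> (1 + e) * (\<integral>x. h x * \<phi> (W x) \<partial>M)"
  proof -
    have "(\<integral>x. (f x)\<^sup>2 * (\<phi> (W x) / W x) \<partial>M) \<le> (\<integral>x. (1 + e) * (h x * \<phi> (W x)) \<partial>M)"
    proof (rule integral_mono)
      show "integrable M (\<lambda>x. (f x)\<^sup>2 * (\<phi> (W x) / W x))"
        by (rule integrable_A_mult[OF square_in_A[OF f] lyapunov_rate_integrable(2)[OF lyap]])
      show "integrable M (\<lambda>x. (1 + e) * (h x * \<phi> (W x)))"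
        using integrable_A_mult[OF h lyapunov_rate_integrable(1)[OF lyap]] by simp
      show "(f x)\<^sup>2 * (\<phi> (W x) / W x) \<le> (1 + e) * (h x * \<phi> (W x))" for x
        using mult_left_mono[OF psi_W(3)[of x], of "(f x)\<^sup>2 * \<phi> (W x)"] W(2)[of x] W(3)[of "W x"]
        by (simp add: h_def algebra_simps)
    qed
    then show ?thesis by simp
  qed
  have decay: "(\<integral>x. h x * \<phi> (W x) \<partial>M)
               \<le> (\<integral>x. carre L h W x \<partial>M) + b * (\<integral>x\<in>U. (f x)\<^sup>2 \<partial>M)"
    using psi_W by (intro lyapunov_energy_estimate[OF lyap KU U h square_in_A[OF f]])
      (auto simp: h_def mult_left_le)
  have gradient: "(\<integral>x. carre L h W x \<partial>M) \<le> (1 + \<delta>) * G"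
  proof -
    have "(\<integral>x. carre L h W x \<partial>M) \<le> (\<integral>x. (1 + \<delta>) * carre L f f x \<partial>M)"
      using integrable_carre[OF h W(1)] integrable_carre[OF f f]
        carre_weighted_square_bound[OF W(1,2) f \<delta>]
      by (intro integral_mono) (auto simp: h_def e_def)
    then show ?thesis using energy by (simp add: G_def)
  qed
  have local_mass: "b * (\<integral>x\<in>U. (f x)\<^sup>2 \<partial>M) \<le> b * \<kappa> * G"
    using poincare W(6) by (simp add: f_sq G_def mult_left_mono mult.assoc)
  have "(\<integral>x. h x * \<phi> (W x) \<partial>M) \<le> (1 + \<delta> + b * \<kappa>) * G"
    using decay gradient local_mass by (simp add: algebra_simps)
  then have "(1 + e) * (\<integral>x. h x * \<phi> (W x) \<partial>M) \<le> (1 + e) * ((1 + \<delta> + b * \<kappa>) * G)"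
    using e by (simp add: mult_left_mono)
  then show ?thesis
    using weight by (simp add: f_sq e_def G_def)
qed

text \<open>The local Poincare inequality, applied to \<open>g\<close> minus its mean on \<open>U\<close>.\<close>
lemma local_poincare_centered:
  assumes P: "local_poincare M A L U \<kappa>" and g: "g \<in> A"
  obtains c where "(\<integral>x\<in>U. (g x - c)\<^sup>2 \<partial>M) \<le> \<kappa> * (\<integral>x. carre L g g x \<partial>M)"
proof
  define c where "c = (\<integral>x\<in>U. g x \<partial>M) / measure M U"
  have U: "U \<in> sets M" using P by (simp add: local_poincare_def)
  have f: "(\<lambda>x. g x + - c) \<in> A" by (rule add_in_A[OF g const_in_A])
  have mean_zero: "(1 / measure M U) * (\<integral>x\<in>U. g x + - c \<partial>M)\<^sup>2 = 0"
  proof (cases "measure M U = 0")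
    case False
    interpret prob_space M by (rule prob_space_M)
    have "set_integrable M U g" "set_integrable M U (\<lambda>_. c)"
      using integrable_mult_indicator[OF U integrable_A[OF g]]
        integrable_mult_indicator[OF U integrable_A[OF const_in_A]]
      by (simp_all add: set_integrable_def)
    then have "(\<integral>x\<in>U. g x + - c \<partial>M) = (\<integral>x\<in>U. g x \<partial>M) - c * measure M U"
      using set_integral_const[OF U emeasure_finite[unfolded infinity_ennreal_def[symmetric]], of c]
      by (simp add: set_integral_diff(2) mult.commute)
    then show ?thesis using False by (simp add: c_def)
  qed simp
  have "(\<integral>x\<in>U. (g x + - c)\<^sup>2 \<partial>M) \<le> \<kappa> * (\<integral>x. carre L (\<lambda>x. g x + - c) (\<lambda>x. g x + - c) x \<partial>M)
        + (1 / measure M U) * (\<integral>x\<in>U. g x + - c \<partial>M)\<^sup>2"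
    using local_poincareD[OF P f] .
  then show "(\<integral>x\<in>U. (g x - c)\<^sup>2 \<partial>M) \<le> \<kappa> * (\<integral>x. carre L g g x \<partial>M)"
    unfolding mean_zero carre_shift[OF g] by simp
qed

end

text \<open>Centre \<open>g\<close> on \<open>U\<close>, apply the approximate inequality for every \<open>\<delta> \<in> (0,1]\<close>,
  let \<open>\<delta> \<rightarrow> 0\<close>, and bound the infimum by the value at the centring constant.\<close>
theorem mainTheorem8:
  fixes M :: "'a::polish_space measure"
    and A :: "('a \<Rightarrow> real) set"
    and L :: "('a \<Rightarrow> real) \<Rightarrow> ('a \<Rightarrow> real)"
    and \<phi> :: "real \<Rightarrow> real" and W g :: "'a \<Rightarrow> real"
    and K U :: "'a set" and b \<kappa> :: real
  assumes "diffusion_setting M A L"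
    and "phi_lyapunov A L \<phi> W K b"
    and "K \<subseteq> U"
    and "local_poincare M A L U \<kappa>"
    and "g \<in> A"
  shows "(INF c::real. (\<integral>x. (g x - c)\<^sup>2 * (\<phi> (W x) / W x) \<partial>M))
           \<le> (1 + b * \<kappa>) * (\<integral>x. carre L g g x \<partial>M)"
proof -
  interpret diffusion M A L by (rule diffusion.intro) fact
  have U: "U \<in> sets M" using assms(4) by (simp add: local_poincare_def)
  obtain c where poincare: "(\<integral>x\<in>U. (g x - c)\<^sup>2 \<partial>M) \<le> \<kappa> * (\<integral>x. carre L g g x \<partial>M)"
    using local_poincare_centered[OF assms(4,5)] .
  define weighted where "weighted c = (\<integral>x. (g x - c)\<^sup>2 * (\<phi> (W x) / W x) \<partial>M)" for c
  define G where "G = (\<integral>x. carre L g g x \<partial>M)"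
  have "weighted c \<le> (1 + 0/2) * ((1 + 0 + b * \<kappa>) * G)"
  proof (rule tendsto_lowerbound)
    show "((\<lambda>\<delta>. (1 + \<delta>/2) * ((1 + \<delta> + b * \<kappa>) * G)) \<longlongrightarrow> (1 + 0/2) * ((1 + 0 + b * \<kappa>) * G))
            (at_right 0)"
      by (intro tendsto_intros) simp
    have "\<forall>\<^sub>F \<delta> in at_right 0. \<delta> \<in> {0<..<1::real}"
      by (rule eventually_at_right_real) simp
    then show "\<forall>\<^sub>F \<delta> in at_right 0. weighted c \<le> (1 + \<delta>/2) * ((1 + \<delta> + b * \<kappa>) * G)"
      unfolding weighted_def G_def
      by eventually_elim (rule weighted_poincare_approx[OF assms(2,3) U assms(5) poincare]; simp)
  qed (rule trivial_limit_at_right_real)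
  moreover have "(INF c. weighted c) \<le> weighted c"
  proof (rule cINF_lower)
    have "0 \<le> \<phi> (W x) / W x" for x
      using phi_lyapunovD(2)[OF assms(2), of x] phi_lyapunovD(3)[OF assms(2), of "W x"] by simp
    then have "0 \<le> weighted c'" for c'
      unfolding weighted_def by (intro integral_nonneg_AE AE_I2 mult_nonneg_nonneg) auto
    then show "bdd_below (range weighted)" by (intro bdd_belowI[of _ 0]) auto
  qed simp
  ultimately show ?thesis by (simp add: weighted_def G_def)
qed

end
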